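(* Let $\Sigma_0>0$, $\sigma_u>0$, $\Delta t=\tfrac12$, and let real numbers $\beta_1,\beta_2,\lambda_1,\lambda_2,\alpha_1,\Sigma_1$ with $\alpha_2=0$ form a two-period linear equilibrium of Kyle's (1985) model, i.e. for $n=1,2$: $$\beta_n=\frac{1-2\alpha_n\lambda_n}{2\lambda_n(1-\alpha_n\lambda_n)},\quad \lambda_n=\frac{\beta_n\Sigma_{n-1}}{\beta_n^2\Sigma_{n-1}+\sigma_u^2\Delta t},\quad \Sigma_n=(1-\lambda_n\beta_n)\Sigma_{n-1},\quad \lambda_n(1-\alpha_n\lambda_n)>0,$$ and $\alpha_1=\dfrac{1}{4\lambda_2(1-\alpha_2\lambda_2)}$. Define $\ell(b)=\dfrac{b\Sigma_0}{b^2\Sigma_0+\sigma_u^2\Delta t}$ for $b\in\mathbb R$ (the first-period pricing rule as a function of the first-period trading intensity under semi-strong market efficiency). Then $\ell'(\beta_1)>0$.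
   Context: Kyle's two-period model: asset value $v\sim N(p_0,\Sigma_0)$; noise orders $u_1,u_2$ i.i.d. $N(0,\sigma_u^2\Delta t)$ independent of $v$; the insider submits $x_n=\beta_n(v-p_{n-1})$; prices move by $p_n-p_{n-1}=\lambda_n(x_n+u_n)$. In Kyle's equilibrium the insider treats $\lambda_n$ as a constant not affected by her choice of $\beta_n$, which yields the displayed equations; the equation $\lambda_n=\beta_n\Sigma_{n-1}/(\beta_n^2\Sigma_{n-1}+\sigma_u^2\Delta t)$ expresses semi-strong market efficiency $p_n=E[v\mid x_1+u_1,\dots,x_n+u_n]$, with $\Sigma_n$ the conditional variance of $v$ after $n$ rounds. *)

theory Defs
  imports "HOL-Analysis.Analysis"
begin

definition kyle_ell :: "real \<Rightarrow> real \<Rightarrow> real \<Rightarrow> real \<Rightarrow> real" where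
  "kyle_ell Sigma0 sigma_u dt b = b * Sigma0 / (b^2 * Sigma0 + sigma_u^2 * dt)"

end

theory Submission
  imports Defs
begin

text \<open>Writing \<open>c = \<sigma>\<^sub>u\<^sup>2 \<Delta>t\<close>, the pricing rule has
  \<open>\<ell>'(b) = \<Sigma>\<^sub>0 (c - b\<^sup>2\<Sigma>\<^sub>0) / (b\<^sup>2\<Sigma>\<^sub>0 + c)\<^sup>2\<close>, and \<open>\<ell>(b) b = b\<^sup>2\<Sigma>\<^sub>0 / (b\<^sup>2\<Sigma>\<^sub>0 + c)\<close>,
  so \<open>\<ell>'(\<beta>\<^sub>1) > 0\<close> is equivalent to \<open>\<lambda>\<^sub>1\<beta>\<^sub>1 < 1/2\<close>. The insider's first-order condition gives
  \<open>\<lambda>\<^sub>1\<beta>\<^sub>1 = (1 - 2t)/(2(1 - t))\<close> with \<open>t = \<alpha>\<^sub>1\<lambda>\<^sub>1\<close>, which is below \<open>1/2\<close> exactly when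
  \<open>0 < t < 1\<close>; this holds because \<open>\<alpha>\<^sub>1 = 1/(4\<lambda>\<^sub>2) > 0\<close> and the second-order condition
  \<open>\<lambda>\<^sub>1(1 - \<alpha>\<^sub>1\<lambda>\<^sub>1) > 0\<close> then forces \<open>\<lambda>\<^sub>1 > 0\<close>.\<close>

lemma kyle_ell_has_real_derivative:
  assumes "b^2 * Sigma0 + sigma_u^2 * dt \<noteq> 0"
  shows "(kyle_ell Sigma0 sigma_u dt has_real_derivative
           Sigma0 * (sigma_u^2 * dt - b^2 * Sigma0) / (b^2 * Sigma0 + sigma_u^2 * dt)^2) (at b)"
proof -
  have "((\<lambda>b. b * Sigma0 / (b^2 * Sigma0 + sigma_u^2 * dt)) has_real_derivative
         (Sigma0 * (b^2 * Sigma0 + sigma_u^2 * dt) - b * Sigma0 * (2 * b * Sigma0))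
           / (b^2 * Sigma0 + sigma_u^2 * dt)^2) (at b)"
    by (rule derivative_eq_intros refl | use assms in \<open>auto simp: power2_eq_square\<close>)+
  moreover have "Sigma0 * (b^2 * Sigma0 + sigma_u^2 * dt) - b * Sigma0 * (2 * b * Sigma0)
      = Sigma0 * (sigma_u^2 * dt - b^2 * Sigma0)"
    by (simp add: algebra_simps power2_eq_square)
  ultimately show ?thesis
    by (simp add: kyle_ell_def[abs_def])
qed

lemma deriv_kyle_ell_pos:
  assumes "Sigma0 > 0" and "b^2 * Sigma0 < sigma_u^2 * dt"
  shows "deriv (kyle_ell Sigma0 sigma_u dt) b > 0"
proof -
  have "b^2 * Sigma0 \<ge> 0"
    using assms(1) by simp
  with assms(2) have "b^2 * Sigma0 + sigma_u^2 * dt > 0"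
    by linarith
  then have "deriv (kyle_ell Sigma0 sigma_u dt) b
      = Sigma0 * (sigma_u^2 * dt - b^2 * Sigma0) / (b^2 * Sigma0 + sigma_u^2 * dt)^2"
    by (intro DERIV_imp_deriv kyle_ell_has_real_derivative) simp
  also have "\<dots> > 0"
    using assms \<open>b^2 * Sigma0 + sigma_u^2 * dt > 0\<close> by simp
  finally show ?thesis .
qed

lemma kyle_ell_mult_less_half_iff:
  assumes "Sigma0 \<ge> 0" and "sigma_u^2 * dt > 0"
  shows "kyle_ell Sigma0 sigma_u dt b * b < 1/2 \<longleftrightarrow> b^2 * Sigma0 < sigma_u^2 * dt"
proof -
  have pos: "b^2 * Sigma0 + sigma_u^2 * dt > 0"
    using assms by (simp add: add_nonneg_pos)
  have "kyle_ell Sigma0 sigma_u dt b * b = b^2 * Sigma0 / (b^2 * Sigma0 + sigma_u^2 * dt)"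
    by (simp add: kyle_ell_def power2_eq_square)
  also have "\<dots> < 1/2 \<longleftrightarrow> 2 * (b^2 * Sigma0) < b^2 * Sigma0 + sigma_u^2 * dt"
    using pos by (simp add: divide_less_eq)
  finally show ?thesis by linarith
qed

lemma optimal_intensity_mult_impact_less_half:
  fixes alpha lambda beta :: real
  assumes beta: "beta = (1 - 2 * alpha * lambda) / (2 * lambda * (1 - alpha * lambda))"
    and second_order: "lambda * (1 - alpha * lambda) > 0"
    and "alpha > 0"
  shows "lambda * beta < 1/2"
proof -
  have "lambda > 0"
  proof (rule ccontr)
    assume "\<not> lambda > 0"
    with \<open>alpha > 0\<close> have "alpha * lambda \<le> 0"
      by (simp add: mult_nonneg_nonpos)
    with \<open>\<not> lambda > 0\<close> have "lambda * (1 - alpha * lambda) \<le> 0"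
      by (simp add: mult_nonpos_nonneg)
    with second_order show False
      by simp
  qed
  with second_order have "1 - alpha * lambda > 0"
    by (simp add: zero_less_mult_iff)
  have "lambda * beta = (1 - 2 * (alpha * lambda)) / (2 * (1 - alpha * lambda))"
    using beta \<open>lambda > 0\<close> \<open>1 - alpha * lambda > 0\<close> by (simp add: field_simps)
  also have "\<dots> < 1/2"
    using \<open>1 - alpha * lambda > 0\<close> \<open>alpha > 0\<close> \<open>lambda > 0\<close> by (simp add: field_simps)
  finally show ?thesis .
qed

theorem proposition1:
  fixes Sigma0 Sigma1 Sigma2 sigma_u dt beta1 beta2 lambda1 lambda2 alpha1 alpha2 :: real
  assumes "Sigma0 > 0" and "sigma_u > 0" and "dt = 1/2" and "alpha2 = 0"
    and "beta1 = (1 - 2 * alpha1 * lambda1) / (2 * lambda1 * (1 - alpha1 * lambda1))"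
    and "lambda1 = beta1 * Sigma0 / (beta1^2 * Sigma0 + sigma_u^2 * dt)"
    and "Sigma1 = (1 - lambda1 * beta1) * Sigma0"
    and "lambda1 * (1 - alpha1 * lambda1) > 0"
    and "beta2 = (1 - 2 * alpha2 * lambda2) / (2 * lambda2 * (1 - alpha2 * lambda2))"
    and "lambda2 = beta2 * Sigma1 / (beta2^2 * Sigma1 + sigma_u^2 * dt)"
    and "Sigma2 = (1 - lambda2 * beta2) * Sigma1"
    and "lambda2 * (1 - alpha2 * lambda2) > 0"
    and "alpha1 = 1 / (4 * lambda2 * (1 - alpha2 * lambda2))"
  shows "deriv (kyle_ell Sigma0 sigma_u dt) beta1 > 0"
proof -
  have "alpha1 > 0"
    using assms(4,12,13) by simp
  with assms(5,8) have "lambda1 * beta1 < 1/2"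
    by (rule optimal_intensity_mult_impact_less_half)
  moreover have "lambda1 = kyle_ell Sigma0 sigma_u dt beta1"
    using assms(6) by (simp add: kyle_ell_def)
  ultimately have "kyle_ell Sigma0 sigma_u dt beta1 * beta1 < 1/2"
    by simp
  moreover have "sigma_u^2 * dt > 0"
    using assms(2,3) by simp
  ultimately have "beta1^2 * Sigma0 < sigma_u^2 * dt"
    using assms(1) kyle_ell_mult_less_half_iff by simp
  with assms(1) show ?thesis
    by (rule deriv_kyle_ell_pos)
qed

end
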